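(* Let $(\mathcal J^n)_{n\in\mathbb N}$ be a sequence of closed convex subsets of $\mathbb R^d$ with set limit $\mathcal J=\operatorname{Lim}_{n\to\infty}\mathcal J^n$, and let $Q$ be a $d\times d$ matrix such that $\ker(Q)\subseteq\mathcal J^n$ for all $n\in\mathbb N$ and $\ker(Q)\subseteq\mathcal J$. Then $Q\mathcal J=\operatorname{Lim}_{n\to\infty}Q\mathcal J^n$.
   Context: For subsets $\mathcal J^n\subseteq\mathbb R^d$: the upper limit is $\operatorname{Limsup}_n\mathcal J^n:=\{x\in\mathbb R^d:\liminf_{n\to\infty}\mathrm{dist}(x,\mathcal J^n)=0\}$ (the cluster points of sequences $x_n\in\mathcal J^n$), the lower limit is $\operatorname{Liminf}_n\mathcal J^n:=\{x:\lim_{n\to\infty}\mathrm{dist}(x,\mathcal J^n)=0\}$ (limits of sequences $x_n\in\mathcal J^n$), and $\mathcal J$ is the set limit, $\mathcal J=\operatorname{Lim}_n\mathcal J^n$, if $\mathcal J=\operatorname{Limsup}_n\mathcal J^n=\operatorname{Liminf}_n\mathcal J^n$. For a set $\mathcal S$, $Q\mathcal S:=\{Qs:s\in\mathcal S\}$. *)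

theory Defs
  imports "HOL-Analysis.Analysis"
begin

text \<open>Distance from a point to a set, with the convention dist(x, empty) = +infinity.\<close>
definition set_dist_pt :: "'a::metric_space \<Rightarrow> 'a set \<Rightarrow> ereal" where
  "set_dist_pt x S = (INF y\<in>S. ereal (dist x y))"

definition upper_limit :: "(nat \<Rightarrow> 'a::metric_space set) \<Rightarrow> 'a set" where
  "upper_limit J = {x. liminf (\<lambda>n. set_dist_pt x (J n)) = 0}"

definition lower_limit :: "(nat \<Rightarrow> 'a::metric_space set) \<Rightarrow> 'a set" where
  "lower_limit J = {x. ((\<lambda>n. set_dist_pt x (J n)) \<longlongrightarrow> 0) sequentially}"

definition set_limit :: "(nat \<Rightarrow> 'a::metric_space set) \<Rightarrow> 'a set \<Rightarrow> bool" where
  "set_limit J L \<longleftrightarrow> L = upper_limit J \<and> L = lower_limit J"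

end

theory Submission
  imports Defs
begin

text \<open>Let \<open>A\<close> be linear with kernel inside every closed convex \<open>J\<^sub>n\<close>. Then each \<open>J\<^sub>n\<close> is invariant
  under translation by the kernel, so by a bounded right inverse of \<open>A\<close> the distances
  \<open>d(x, J\<^sub>n)\<close> and \<open>d(A x, A J\<^sub>n)\<close> are bounded by constant multiples of each other, uniformly
  in \<open>n\<close>; and a point outside the closed subspace \<open>range A\<close> keeps a positive distance from
  every \<open>A J\<^sub>n\<close>. Both the upper and the lower limit are described by the smallness of these
  distances, so they commute with \<open>A\<close>.\<close>

lemma set_dist_pt_eq_infdist:
  fixes x :: "'a::metric_space"
  assumes "S \<noteq> {}"
  shows "set_dist_pt x S = ereal (infdist x S)"
proof -
  have "bdd_below (dist x ` S)" by (rule bdd_belowI[of _ 0]) auto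
  then have "ereal (Inf (dist x ` S)) = (INF a\<in>dist x ` S. ereal a)"
    using assms by (intro ereal_Inf') auto
  then show ?thesis unfolding set_dist_pt_def infdist_notempty[OF assms]
    by (simp add: image_image)
qed

lemma upper_limit_eq_liminf_infdist:
  assumes "\<And>n. J n \<noteq> {}"
  shows "upper_limit J = {x. liminf (\<lambda>n. ereal (infdist x (J n))) = 0}"
  unfolding upper_limit_def by (simp add: set_dist_pt_eq_infdist[OF assms])

lemma lower_limit_eq_infdist_tendsto_0:
  assumes "\<And>n. J n \<noteq> {}"
  shows "lower_limit J = {x. (\<lambda>n. infdist x (J n)) \<longlonglongrightarrow> 0}"
  unfolding lower_limit_def by (simp add: set_dist_pt_eq_infdist[OF assms] zero_ereal_def)

lemma infdist_le_scaled_infdist: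
  fixes x :: "'a::metric_space" and a :: "'b::metric_space"
  assumes S: "S \<noteq> {}" and c: "c > 0" and h: "\<forall>y\<in>S. \<exists>y'\<in>T. dist a y' \<le> c * dist x y"
  shows "infdist a T \<le> c * infdist x S"
proof -
  have "infdist a T / c \<le> infdist x S"
    unfolding infdist_notempty[OF S]
  proof (rule cINF_greatest)
    fix y assume "y \<in> S"
    then obtain y' where "y' \<in> T" "dist a y' \<le> c * dist x y" using h by blast
    then have "infdist a T \<le> c * dist x y" using infdist_le[of y' T a] by linarith
    then show "infdist a T / c \<le> dist x y" using c by (simp add: field_simps)
  qed (rule S)
  then show ?thesis using c by (simp add: field_simps)
qed

lemma closed_convex_add_subspace:
  fixes S V :: "'a::real_normed_vector set"
  assumes "closed S" "convex S" "subspace V" "V \<subseteq> S" "y \<in> S" "v \<in> V"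
  shows "y + v \<in> S"
proof -
  define s where "s m = (1 - inverse (real (Suc m))) *\<^sub>R y + v" for m
  have "s m \<in> S" for m
  proof -
    define t where "t = inverse (real (Suc m))"
    have t: "t > 0" "t \<le> 1" unfolding t_def by (auto simp: inverse_le_1_iff)
    have "(1 / t) *\<^sub>R v \<in> S" using assms(3,4,6) by (auto intro: subspace_scale)
    then have "(1 - t) *\<^sub>R y + t *\<^sub>R ((1 / t) *\<^sub>R v) \<in> S"
      by (rule convexD[OF assms(2,5)]) (use t in auto)
    then show ?thesis using t unfolding s_def t_def[symmetric] by simp
  qed
  moreover have "s \<longlonglongrightarrow> (1 - 0) *\<^sub>R y + v"
    unfolding s_def by (intro tendsto_intros LIMSEQ_inverse_real_of_nat)
  ultimately show ?thesis using closed_sequentially[OF assms(1)] by fastforce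
qed

lemma bounded_linear_infdist_image_le:
  assumes "bounded_linear f"
  obtains B where "B > 0" "\<And>S x. infdist (f x) (f ` S) \<le> B * infdist x S"
proof -
  obtain B where B: "B > 0" "\<And>x. norm (f x) \<le> norm x * B"
    using bounded_linear.pos_bounded[OF assms] by blast
  have "infdist (f x) (f ` S) \<le> B * infdist x S" for S x
  proof (cases "S = {}")
    case nonempty: False
    show ?thesis
    proof (rule infdist_le_scaled_infdist[OF nonempty B(1)], intro ballI)
      fix y assume "y \<in> S"
      moreover have "dist (f x) (f y) \<le> B * dist x y"
        using B(2)[of "x - y"] bounded_linear.linear[OF assms]
        by (simp add: dist_norm linear_diff mult.commute)
      ultimately show "\<exists>y'\<in>f ` S. dist (f x) y' \<le> B * dist x y" by blast
    qed
  qed (simp add: infdist_def)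
  with B(1) show ?thesis by (rule that)
qed

lemma linear_infdist_le_infdist_image:
  fixes f :: "'a::euclidean_space \<Rightarrow> 'b::euclidean_space"
  assumes "linear f"
  obtains C where "C > 0"
    "\<And>S x. closed S \<Longrightarrow> convex S \<Longrightarrow> {k. f k = 0} \<subseteq> S \<Longrightarrow> infdist x S \<le> C * infdist (f x) (f ` S)"
proof -
  obtain g where g: "linear g" "\<And>v. v \<in> range f \<Longrightarrow> f (g v) = v"
    using linear_exists_right_inverse_on[OF assms subspace_UNIV] by blast
  obtain C where C: "C > 0" "\<And>v. norm (g v) \<le> norm v * C"
    using bounded_linear.pos_bounded[of g] g(1) linear_conv_bounded_linear by blast
  have "infdist x S \<le> C * infdist (f x) (f ` S)"
    if S: "closed S" "convex S" "{k. f k = 0} \<subseteq> S" for S x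
  proof (rule infdist_le_scaled_infdist[OF _ C(1)], use S linear_0[OF assms] in blast, intro ballI)
    fix z assume "z \<in> f ` S"
    then obtain y where y: "y \<in> S" "z = f y" by blast
    \<comment> \<open>\<open>y + k \<in> S\<close> differs from \<open>x\<close> by \<open>g (f (x - y))\<close>, whose norm is controlled by \<open>dist (f x) z\<close>.\<close>
    define k where "k = (x - y) - g (f (x - y))"
    have "f (g (f (x - y))) = f (x - y)" by (rule g(2)) simp
    then have "f k = 0" unfolding k_def by (simp add: linear_diff[OF assms])
    then have "y + k \<in> S"
      using closed_convex_add_subspace[OF S(1,2) linear_subspace_kernel[OF assms] S(3) y(1)] by blast
    moreover have "dist x (y + k) \<le> C * dist (f x) z"
      using C(2)[of "f (x - y)"] y(2)
      by (simp add: k_def dist_norm linear_diff[OF assms] algebra_simps)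
    ultimately show "\<exists>y'\<in>S. dist x y' \<le> C * dist (f x) z" by blast
  qed
  with C(1) show ?thesis by (rule that)
qed

lemma linear_infdist_image_bounded_below:
  fixes f :: "'a::euclidean_space \<Rightarrow> 'b::euclidean_space"
  assumes "linear f" "z \<notin> range f"
  obtains d where "d > 0" "\<And>S. S \<noteq> {} \<Longrightarrow> d \<le> infdist z (f ` S)"
proof
  have "closed (range f)"
    by (rule closed_subspace) (rule linear_subspace_image[OF assms(1) subspace_UNIV])
  then show "infdist z (range f) > 0"
    using infdist_pos_not_in_closed assms(2) by blast
  show "infdist z (range f) \<le> infdist z (f ` S)" if "S \<noteq> {}" for S
    using that by (intro infdist_mono) auto
qed

text \<open>\<open>P\<close> will be "liminf is zero" for upper limits and "tends to zero" for lower limits.\<close>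

lemma linear_image_distance_limit:
  fixes f :: "'a::euclidean_space \<Rightarrow> 'b::euclidean_space" and J :: "nat \<Rightarrow> 'a set"
  assumes f: "linear f"
    and J: "\<And>n. closed (J n)" "\<And>n. convex (J n)" "\<And>n. {k. f k = 0} \<subseteq> J n"
    and P_mono: "\<And>a b c. c > 0 \<Longrightarrow> (\<And>n. 0 \<le> a n) \<Longrightarrow> (\<And>n. a n \<le> c * b n) \<Longrightarrow> P b \<Longrightarrow> P a"
    and P_bounded_below: "\<And>a d. d > 0 \<Longrightarrow> (\<And>n. d \<le> a n) \<Longrightarrow> \<not> P a"
  shows "{z. P (\<lambda>n. infdist z (f ` J n))} = f ` {x. P (\<lambda>n. infdist x (J n))}"
proof (intro set_eqI iffI)
  obtain B where B: "B > 0" "\<And>S x. infdist (f x) (f ` S) \<le> B * infdist x S"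
    using bounded_linear_infdist_image_le f linear_conv_bounded_linear by blast
  obtain C where C: "C > 0" "\<And>S x. closed S \<Longrightarrow> convex S \<Longrightarrow> {k. f k = 0} \<subseteq> S \<Longrightarrow>
      infdist x S \<le> C * infdist (f x) (f ` S)"
    using linear_infdist_le_infdist_image[OF f] by blast
  have ne: "J n \<noteq> {}" for n using J(3) linear_0[OF f] by blast
  fix z
  show "z \<in> f ` {x. P (\<lambda>n. infdist x (J n))}" if z: "z \<in> {z. P (\<lambda>n. infdist z (f ` J n))}"
  proof (cases "z \<in> range f")
    case True
    then obtain x where x: "z = f x" by blast
    have "P (\<lambda>n. infdist x (J n))"
      using P_mono[of C "\<lambda>n. infdist x (J n)" "\<lambda>n. infdist (f x) (f ` J n)"]
        C(1) C(2)[OF J] z x by (simp add: infdist_nonneg)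
    with x show ?thesis by blast
  next
    case False
    then obtain d where d: "d > 0" "\<And>S. S \<noteq> {} \<Longrightarrow> d \<le> infdist z (f ` S)"
      using linear_infdist_image_bounded_below[OF f] by blast
    have "\<not> P (\<lambda>n. infdist z (f ` J n))"
      using P_bounded_below[of d "\<lambda>n. infdist z (f ` J n)"] d ne by simp
    with z show ?thesis by simp
  qed
  show "z \<in> {z. P (\<lambda>n. infdist z (f ` J n))}" if z: "z \<in> f ` {x. P (\<lambda>n. infdist x (J n))}"
  proof -
    obtain x where "z = f x" "P (\<lambda>n. infdist x (J n))" using z by blast
    then show ?thesis
      using P_mono[of B "\<lambda>n. infdist (f x) (f ` J n)" "\<lambda>n. infdist x (J n)"]
        B by (simp add: infdist_nonneg)
  qed
qed

lemma upper_limit_linear_image: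
  fixes f :: "'a::euclidean_space \<Rightarrow> 'b::euclidean_space" and J :: "nat \<Rightarrow> 'a set"
  assumes f: "linear f"
    and J: "\<And>n. closed (J n)" "\<And>n. convex (J n)" "\<And>n. {k. f k = 0} \<subseteq> J n"
  shows "upper_limit (\<lambda>n. f ` J n) = f ` upper_limit J"
proof -
  have ne: "J n \<noteq> {}" and ne_image: "f ` J n \<noteq> {}" for n using J(3) linear_0[OF f] by blast+
  have "liminf (\<lambda>n. ereal (a n)) = 0"
    if "c > 0" "\<And>n. 0 \<le> a n" "\<And>n. a n \<le> c * b n" "liminf (\<lambda>n. ereal (b n)) = 0" for a b c
  proof (rule antisym)
    have "liminf (\<lambda>n. ereal (a n)) \<le> liminf (\<lambda>n. ereal c * ereal (b n))"
      using that(3) by (intro Liminf_mono) auto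
    also have "\<dots> = 0"
      using that(1,4) Liminf_ereal_mult_left[of sequentially c "\<lambda>n. ereal (b n)"] by simp
    finally show "liminf (\<lambda>n. ereal (a n)) \<le> 0" .
    show "0 \<le> liminf (\<lambda>n. ereal (a n))"
      using that(2) by (intro Liminf_bounded) auto
  qed
  moreover have "liminf (\<lambda>n. ereal (a n)) \<noteq> 0" if "d > 0" "\<And>n. d \<le> a n" for a d
  proof -
    have "ereal d \<le> liminf (\<lambda>n. ereal (a n))"
      using that(2) by (intro Liminf_bounded) auto
    with that(1) show ?thesis by auto
  qed
  ultimately show ?thesis
    unfolding upper_limit_eq_liminf_infdist[OF ne] upper_limit_eq_liminf_infdist[OF ne_image]
    by (rule linear_image_distance_limit[OF f J])
qed

lemma lower_limit_linear_image:
  fixes f :: "'a::euclidean_space \<Rightarrow> 'b::euclidean_space" and J :: "nat \<Rightarrow> 'a set"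
  assumes f: "linear f"
    and J: "\<And>n. closed (J n)" "\<And>n. convex (J n)" "\<And>n. {k. f k = 0} \<subseteq> J n"
  shows "lower_limit (\<lambda>n. f ` J n) = f ` lower_limit J"
proof -
  have ne: "J n \<noteq> {}" and ne_image: "f ` J n \<noteq> {}" for n using J(3) linear_0[OF f] by blast+
  have "a \<longlonglongrightarrow> 0"
    if "c > 0" "\<And>n. 0 \<le> a n" "\<And>n. a n \<le> c * b n" "b \<longlonglongrightarrow> 0" for a b :: "nat \<Rightarrow> real" and c :: real
  proof (rule Lim_null_comparison)
    show "\<forall>\<^sub>F n in sequentially. norm (a n) \<le> c * b n"
      using that(2,3) by (simp add: always_eventually)
    show "(\<lambda>n. c * b n) \<longlonglongrightarrow> 0"
      using that(4) by (rule tendsto_mult_right_zero)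
  qed
  moreover have "\<not> a \<longlonglongrightarrow> 0" if "d > 0" "\<And>n. d \<le> a n" for a :: "nat \<Rightarrow> real" and d
  proof
    assume "a \<longlonglongrightarrow> 0"
    then have "d \<le> 0" by (rule LIMSEQ_le_const) (use that(2) in blast)
    with that(1) show False by simp
  qed
  ultimately show ?thesis
    unfolding lower_limit_eq_infdist_tendsto_0[OF ne] lower_limit_eq_infdist_tendsto_0[OF ne_image]
    by (rule linear_image_distance_limit[OF f J])
qed

theorem propositionC3:
  fixes J :: "nat \<Rightarrow> (real ^ 'd) set" and L :: "(real ^ 'd) set"
    and Q :: "real ^ 'd ^ 'd"
  assumes "\<And>n. closed (J n)" and "\<And>n. convex (J n)"
    and "set_limit J L"
    and "\<And>n. {x. Q *v x = 0} \<subseteq> J n"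
    and "{x. Q *v x = 0} \<subseteq> L"
  shows "set_limit (\<lambda>n. (\<lambda>x. Q *v x) ` J n) ((\<lambda>x. Q *v x) ` L)"
proof -
  have Q: "linear (\<lambda>x. Q *v x)" by (rule matrix_vector_mul_linear)
  have "L = upper_limit J" "L = lower_limit J" using assms(3) unfolding set_limit_def by blast+
  then show ?thesis
    unfolding set_limit_def
      upper_limit_linear_image[OF Q assms(1,2,4)] lower_limit_linear_image[OF Q assms(1,2,4)]
    by blast
qed

end
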